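(* Let $\Gamma$ be a compact subset of a Euclidean space $(\mathbb R^n,d)$, let $\delta>0$, and let $m\in\mathbb N$ with $m\le n$, such that for every $\mathcal P\in\mathrm{Gr}(n,m)$ there exists $x\in\Gamma$ with $d(x,\mathcal P)\ge\delta$. Then there are $x_1,\dots,x_{m+1}\in\Gamma$ such that $\mathrm{MinHeight}(x_1,\dots,x_{m+1})\ge\delta$.
   Context: $\mathrm{Gr}(n,m)$ is the set of $m$-dimensional linear subspaces of $\mathbb R^n$. For vectors $a_1,\dots,a_k$ in the Euclidean space $(\mathbb R^n,d)$, $\mathrm{MinHeight}(a_1,\dots,a_k):=\min_{j\in\{1,\dots,k\}}d\big(a_j,\mathrm{span}(a_1,\dots,\widehat{a}_j,\dots,a_k)\big)$, where $\widehat{a}_j$ means $a_j$ is omitted (the span of the empty family is $\{0\}$). *)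

theory Defs
  imports "HOL-Analysis.Analysis"
begin

definition Grassmannian :: "nat \<Rightarrow> 'a::euclidean_space set set" where
  "Grassmannian m = {P. subspace P \<and> dim P = m}"

definition min_height :: "(nat \<Rightarrow> 'a::euclidean_space) \<Rightarrow> nat \<Rightarrow> real" where
  "min_height a k = Min ((\<lambda>j. infdist (a j) (span (a ` ({1..k} - {j})))) ` {1..k})"

end

theory Submission
  imports Defs
begin

(* Choose points x 1, ..., x (m+1) of \<Gamma> maximising the volume of the parallelotope they span,
   i.e. the product over i of the distance from x i to the span of x 1, ..., x (i-1). This volume
   does not depend on the order of the points, so for every j it equals the height of x j over
   the span of the others times the volume of the others. The hypothesis supplies, for any m
   points, a point of \<Gamma> at distance at least \<delta> from their span; a greedy choice therefore gives
   positive volume, and since the volume is upper semicontinuous and \<Gamma> is compact a maximiser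
   exists. If a height of the maximiser were below \<delta>, replacing that point by such a far point
   would increase the volume. *)

section \<open>Distance to a span\<close>

lemma infdist_subspace_eq_norm:
  fixes a p :: "'a::euclidean_space"
  assumes "subspace S" "p \<in> S" "\<And>w. w \<in> S \<Longrightarrow> orthogonal (a - p) w"
  shows "infdist a S = norm (a - p)"
proof (rule antisym)
  show "infdist a S \<le> norm (a - p)"
    using infdist_le[OF assms(2), of a] by (simp add: dist_norm)
  obtain w where w: "w \<in> S" "infdist a S = dist a w"
    using infdist_attains_inf[OF closed_subspace[OF assms(1)]] assms(2) by blast
  have "p - w \<in> S"
    using assms(1,2) w(1) by (rule subspace_diff)
  then have "(norm ((a - p) + (p - w)))\<^sup>2 = (norm (a - p))\<^sup>2 + (norm (p - w))\<^sup>2"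
    by (intro norm_add_Pythagorean assms(3))
  then have "(norm (a - p))\<^sup>2 \<le> (norm (a - w))\<^sup>2"
    by simp
  then have "norm (a - p) \<le> norm (a - w)"
    by (rule power2_le_imp_le) simp
  then show "norm (a - p) \<le> infdist a S"
    using w(2) by (simp add: dist_norm)
qed

lemma norm_rejection_mult_norm_squared:
  fixes a b :: "'a::real_inner"
  assumes "b \<noteq> 0"
  shows "(norm (a - (a \<bullet> b / (b \<bullet> b)) *\<^sub>R b) * norm b)\<^sup>2 = (a \<bullet> a) * (b \<bullet> b) - (a \<bullet> b)\<^sup>2"
proof -
  define t where "t = a \<bullet> b / (b \<bullet> b)"
  have tb: "t * (b \<bullet> b) = a \<bullet> b"
    using assms by (simp add: t_def)
  have "(norm (a - t *\<^sub>R b) * norm b)\<^sup>2 = ((a - t *\<^sub>R b) \<bullet> (a - t *\<^sub>R b)) * (b \<bullet> b)"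
    by (simp add: power_mult_distrib power2_norm_eq_inner)
  also have "\<dots> = (a \<bullet> a) * (b \<bullet> b) - 2 * (a \<bullet> b) * (t * (b \<bullet> b)) + (t * (b \<bullet> b))\<^sup>2"
    by (simp add: inner_commute[of b a] power2_eq_square algebra_simps)
  also have "\<dots> = (a \<bullet> a) * (b \<bullet> b) - (a \<bullet> b)\<^sup>2"
    unfolding tb by (simp add: power2_eq_square)
  finally show ?thesis
    by (simp add: t_def)
qed

lemma infdist_span_insert_eq_norm_rejection:
  fixes u v pu pv :: "'a::euclidean_space"
  assumes u: "pu \<in> span S" "\<And>w. w \<in> span S \<Longrightarrow> orthogonal (u - pu) w"
    and v: "pv \<in> span S" "\<And>w. w \<in> span S \<Longrightarrow> orthogonal (v - pv) w"
    and "v \<notin> span S"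
  defines "u' \<equiv> u - pu" and "v' \<equiv> v - pv"
  shows "infdist u (span (insert v S)) = norm (u' - (u' \<bullet> v' / (v' \<bullet> v')) *\<^sub>R v')"
proof -
  define t where "t = u' \<bullet> v' / (v' \<bullet> v')"
  have "v' \<noteq> 0"
    using \<open>v \<notin> span S\<close> v(1) by (auto simp: v'_def)
  have "span S \<subseteq> span (insert v S)"
    by (simp add: span_mono subset_insertI)
  then have "pu + t *\<^sub>R v' \<in> span (insert v S)"
    using u(1) v(1) unfolding v'_def
    by (intro span_add span_scale span_diff) (auto simp: span_base)
  moreover have "orthogonal (u - (pu + t *\<^sub>R v')) w" if "w \<in> span (insert v S)" for w
  proof -
    obtain k where k: "w - k *\<^sub>R v \<in> span S"
      using \<open>w \<in> span (insert v S)\<close> span_breakdown_eq by blast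
    define s where "s = w - k *\<^sub>R v"
    have w: "w = s + k *\<^sub>R v' + k *\<^sub>R pv"
      by (simp add: s_def v'_def algebra_simps)
    have eq: "u - (pu + t *\<^sub>R v') = u' - t *\<^sub>R v'"
      by (simp add: u'_def)
    have "u' \<bullet> s = 0" "v' \<bullet> s = 0" "u' \<bullet> pv = 0" "v' \<bullet> pv = 0"
      using u(2) v k unfolding s_def u'_def v'_def orthogonal_def by auto
    moreover have "u' \<bullet> v' = t * (v' \<bullet> v')"
      using \<open>v' \<noteq> 0\<close> by (simp add: t_def)
    ultimately show ?thesis
      unfolding orthogonal_def eq w by (simp add: inner_add_right inner_diff_left)
  qed
  ultimately show ?thesis
    by (subst infdist_subspace_eq_norm) (auto simp: t_def u'_def diff_diff_eq)
qed

text \<open>Both sides equal the area of the parallelogram spanned by the components of \<open>a\<close> and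
  \<open>b\<close> orthogonal to \<open>S\<close>.\<close>
lemma infdist_span_insert_mult_commute:
  fixes a b :: "'a::euclidean_space"
  shows "infdist a (span (insert b S)) * infdist b (span S)
       = infdist b (span (insert a S)) * infdist a (span S)"
proof -
  have area: "infdist u (span (insert v S)) * infdist v (span S)
      = sqrt (((u - pu) \<bullet> (u - pu)) * ((v - pv) \<bullet> (v - pv)) - ((u - pu) \<bullet> (v - pv))\<^sup>2)"
    if u: "pu \<in> span S" "\<And>w. w \<in> span S \<Longrightarrow> orthogonal (u - pu) w"
      and v: "pv \<in> span S" "\<And>w. w \<in> span S \<Longrightarrow> orthogonal (v - pv) w"
      and "v \<notin> span S"
    for u v pu pv :: 'a
  proof -
    have "v - pv \<noteq> 0"
      using \<open>v \<notin> span S\<close> v(1) by auto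
    moreover have "infdist v (span S) = norm (v - pv)"
      using infdist_subspace_eq_norm[OF subspace_span v] .
    ultimately show ?thesis
      using infdist_span_insert_eq_norm_rejection[OF u v \<open>v \<notin> span S\<close>]
        norm_rejection_mult_norm_squared[of "v - pv" "u - pu"]
      by (simp add: real_sqrt_unique)
  qed
  obtain pa where pa: "pa \<in> span S" "\<And>w. w \<in> span S \<Longrightarrow> orthogonal (a - pa) w"
    using orthogonal_subspace_decomp_exists[of S a] by (metis add_diff_cancel_left')
  obtain pb where pb: "pb \<in> span S" "\<And>w. w \<in> span S \<Longrightarrow> orthogonal (b - pb) w"
    using orthogonal_subspace_decomp_exists[of S b] by (metis add_diff_cancel_left')
  show ?thesis
  proof (cases "a \<in> span S \<or> b \<in> span S")
    case True
    have "span S \<subseteq> span (insert c S)" for c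
      by (simp add: span_mono subset_insertI)
    with True show ?thesis
      by (metis infdist_zero mult_zero_left mult_zero_right subsetD)
  next
    case False
    then show ?thesis
      using area[OF pa pb] area[OF pb pa]
      by (simp add: inner_commute mult.commute)
  qed
qed

lemma in_span_imageE:
  fixes x :: "'b \<Rightarrow> 'a::real_vector"
  assumes "finite J" "v \<in> span (x ` J)"
  obtains c where "v = (\<Sum>j\<in>J. c j *\<^sub>R x j)"
  using assms
proof (induction J arbitrary: v thesis rule: finite_induct)
  case empty
  then show ?case by simp
next
  case (insert i J)
  have "v \<in> span (insert (x i) (x ` J))"
    using insert.prems(2) by simp
  then obtain k where "v - k *\<^sub>R x i \<in> span (x ` J)"
    by (auto simp: span_breakdown_eq)
  then obtain c where c: "v - k *\<^sub>R x i = (\<Sum>j\<in>J. c j *\<^sub>R x j)"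
    using insert.IH by blast
  have "(\<Sum>j\<in>insert i J. (c(i := k)) j *\<^sub>R x j) = k *\<^sub>R x i + (\<Sum>j\<in>J. c j *\<^sub>R x j)"
    using insert.hyps by (auto intro: sum.cong)
  then show ?case
    using c insert.prems(1) by (metis add_diff_cancel_left' diff_add_cancel)
qed

section \<open>Volume of a parallelotope\<close>

definition parallelotope_vol :: "(nat \<Rightarrow> 'a::euclidean_space) \<Rightarrow> nat set \<Rightarrow> real" where
  "parallelotope_vol x I = (\<Prod>i\<in>I. infdist (x i) (span (x ` {j\<in>I. j < i})))"

lemma parallelotope_vol_nonneg: "0 \<le> parallelotope_vol x I"
  by (simp add: parallelotope_vol_def prod_nonneg infdist_nonneg)

lemma parallelotope_vol_cong:
  assumes "\<And>i. i \<in> I \<Longrightarrow> x i = y i"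
  shows "parallelotope_vol x I = parallelotope_vol y I"
proof -
  have "x ` {j\<in>I. j < i} = y ` {j\<in>I. j < i}" for i
    using assms by (intro image_cong) auto
  then show ?thesis
    unfolding parallelotope_vol_def using assms by (intro prod.cong) auto
qed

lemma parallelotope_vol_insert_max:
  assumes "finite I" "\<forall>i\<in>I. i < n"
  shows "parallelotope_vol x (insert n I) = infdist (x n) (span (x ` I)) * parallelotope_vol x I"
proof -
  have "n \<notin> I" "{j \<in> insert n I. j < n} = I"
    using assms(2) by auto
  moreover have "{j \<in> insert n I. j < i} = {j \<in> I. j < i}" if "i \<in> I" for i
    using assms(2) that by auto
  ultimately show ?thesis
    using assms(1) by (simp add: parallelotope_vol_def cong: prod.cong)
qed

lemma parallelotope_vol_remove:
  assumes "finite I" "j \<in> I"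
  shows "parallelotope_vol x I
       = infdist (x j) (span (x ` (I - {j}))) * parallelotope_vol x (I - {j})"
  using assms
proof (induction I rule: finite_linorder_max_induct)
  case empty
  then show ?case by simp
next
  case (insert b A)
  show ?case
  proof (cases "j = b")
    case True
    then have "insert b A - {j} = A"
      using insert.hyps(2) by auto
    then show ?thesis
      using insert.hyps True by (simp add: parallelotope_vol_insert_max)
  next
    case False
    then have "j \<in> A"
      using insert.prems by simp
    define S where "S = x ` (A - {j})"
    have A: "x ` A = insert (x j) S"
      using \<open>j \<in> A\<close> by (auto simp: S_def)
    have bA: "insert b A - {j} = insert b (A - {j})" "x ` (insert b A - {j}) = insert (x b) S"
      using False by (auto simp: S_def)
    have "parallelotope_vol x (insert b A)
        = infdist (x b) (span (insert (x j) S)) * infdist (x j) (span S)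
          * parallelotope_vol x (A - {j})"
      using insert.hyps insert.IH[OF \<open>j \<in> A\<close>] A by (simp add: parallelotope_vol_insert_max S_def)
    also have "\<dots> = infdist (x j) (span (insert (x b) S)) * infdist (x b) (span S)
        * parallelotope_vol x (A - {j})"
      by (simp only: infdist_span_insert_mult_commute)
    also have "\<dots> = infdist (x j) (span (x ` (insert b A - {j})))
        * parallelotope_vol x (insert b A - {j})"
      using insert.hyps by (simp add: bA S_def parallelotope_vol_insert_max)
    finally show ?thesis .
  qed
qed

lemma parallelotope_vol_le_power:
  assumes "\<And>i. i \<in> I \<Longrightarrow> norm (x i) \<le> B"
  shows "parallelotope_vol x I \<le> B ^ card I"
proof -
  have "infdist (x i) (span (x ` {j\<in>I. j < i})) \<le> B" if "i \<in> I" for i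
  proof -
    have "infdist (x i) (span (x ` {j\<in>I. j < i})) \<le> dist (x i) 0"
      by (rule infdist_le[OF span_zero])
    with assms[OF that] show ?thesis
      by simp
  qed
  then have "parallelotope_vol x I \<le> (\<Prod>i\<in>I. B)"
    unfolding parallelotope_vol_def by (intro prod_mono) (auto simp: infdist_nonneg)
  then show ?thesis
    by simp
qed

lemma infdist_le_at_parallelotope_vol_max:
  assumes "finite I" "j \<in> I" "0 < parallelotope_vol l I"
    and "parallelotope_vol (l(j := y)) I \<le> parallelotope_vol l I"
  shows "infdist y (span (l ` (I - {j}))) \<le> infdist (l j) (span (l ` (I - {j})))"
proof -
  define W where "W = parallelotope_vol l (I - {j})"
  have "l(j := y) ` (I - {j}) = l ` (I - {j})"
    by auto
  moreover have "parallelotope_vol (l(j := y)) (I - {j}) = W"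
    unfolding W_def by (rule parallelotope_vol_cong) simp
  ultimately
  have "parallelotope_vol (l(j := y)) I = infdist y (span (l ` (I - {j}))) * W"
    using parallelotope_vol_remove[OF assms(1,2), of "l(j := y)"] by simp
  moreover have vol_l: "parallelotope_vol l I = infdist (l j) (span (l ` (I - {j}))) * W"
    using parallelotope_vol_remove[OF assms(1,2)] by (simp add: W_def)
  moreover have "0 < W"
    using assms(3) vol_l infdist_nonneg parallelotope_vol_nonneg[of l "I - {j}"]
    by (simp add: W_def zero_less_mult_iff)
  ultimately show ?thesis
    using assms(4) by simp
qed

section \<open>Upper semicontinuity and maximisers\<close>

definition limsup_at_most :: "(nat \<Rightarrow> real) \<Rightarrow> real \<Rightarrow> bool" where
  "limsup_at_most g a \<longleftrightarrow> (\<forall>e>0. \<forall>\<^sub>F n in sequentially. g n \<le> a + e)"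

lemma limsup_at_most_mult:
  assumes "limsup_at_most g a" "limsup_at_most h b"
    and "\<And>n. 0 \<le> g n" "\<And>n. 0 \<le> h n" "0 \<le> a" "0 \<le> b"
  shows "limsup_at_most (\<lambda>n. g n * h n) (a * b)"
  unfolding limsup_at_most_def
proof (intro allI impI)
  fix e :: real
  assume "e > 0"
  define t where "t = min 1 (e / (a + b + 1))"
  have "t > 0" "t \<le> 1"
    using \<open>e > 0\<close> assms(5,6) by (auto simp: t_def)
  have "t \<le> e / (a + b + 1)"
    by (simp add: t_def)
  then have "t * (a + b + 1) \<le> e"
    using assms(5,6) by (simp add: pos_le_divide_eq)
  have "\<forall>\<^sub>F n in sequentially. g n \<le> a + t" "\<forall>\<^sub>F n in sequentially. h n \<le> b + t"
    using assms(1,2) \<open>t > 0\<close> unfolding limsup_at_most_def by auto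
  then show "\<forall>\<^sub>F n in sequentially. g n * h n \<le> a * b + e"
  proof eventually_elim
    case (elim n)
    have "g n * h n \<le> (a + t) * (b + t)"
      using elim assms(3,4,5) \<open>t > 0\<close> by (intro mult_mono) auto
    also have "\<dots> = a * b + t * (a + b + t)"
      by (simp add: algebra_simps)
    also have "\<dots> \<le> a * b + t * (a + b + 1)"
      using \<open>t > 0\<close> \<open>t \<le> 1\<close> by simp
    also have "\<dots> \<le> a * b + e"
      using \<open>t * (a + b + 1) \<le> e\<close> by simp
    finally show ?case .
  qed
qed

lemma limsup_at_most_prod:
  assumes "finite I" "\<And>i. i \<in> I \<Longrightarrow> limsup_at_most (\<lambda>n. g n i) (a i)"
    and "\<And>i n. i \<in> I \<Longrightarrow> 0 \<le> g n i" "\<And>i. i \<in> I \<Longrightarrow> 0 \<le> a i"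
  shows "limsup_at_most (\<lambda>n. \<Prod>i\<in>I. g n i) (\<Prod>i\<in>I. a i)"
  using assms
proof (induction I rule: finite_induct)
  case empty
  then show ?case
    by (simp add: limsup_at_most_def)
next
  case (insert i I)
  then show ?case
    by (simp add: limsup_at_most_mult prod_nonneg)
qed

text \<open>Only an upper bound holds: the span may lose dimension in the limit.\<close>
lemma limsup_at_most_infdist_span:
  fixes xs :: "nat \<Rightarrow> 'b \<Rightarrow> 'a::euclidean_space"
  assumes "finite J" "ys \<longlonglongrightarrow> y" "\<And>j. j \<in> J \<Longrightarrow> (\<lambda>n. xs n j) \<longlonglongrightarrow> x j"
  shows "limsup_at_most (\<lambda>n. infdist (ys n) (span (xs n ` J))) (infdist y (span (x ` J)))"
  unfolding limsup_at_most_def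
proof (intro allI impI)
  fix e :: real
  assume "e > 0"
  obtain p where p: "p \<in> span (x ` J)" "infdist y (span (x ` J)) = dist y p"
    using infdist_attains_inf[OF closed_subspace[OF subspace_span]] span_zero by blast
  obtain c where c: "p = (\<Sum>j\<in>J. c j *\<^sub>R x j)"
    using in_span_imageE[OF assms(1) p(1)] .
  define ps where "ps n = (\<Sum>j\<in>J. c j *\<^sub>R xs n j)" for n
  have "ps \<longlonglongrightarrow> p"
    unfolding ps_def c using assms(3) by (intro tendsto_sum tendsto_scaleR tendsto_const) auto
  then have "(\<lambda>n. dist (ys n) (ps n)) \<longlonglongrightarrow> dist y p"
    using assms(2) by (intro tendsto_dist)
  then have "\<forall>\<^sub>F n in sequentially. dist (ys n) (ps n) < dist y p + e"
    using \<open>e > 0\<close> by (intro order_tendstoD) auto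
  moreover have "ps n \<in> span (xs n ` J)" for n
    unfolding ps_def by (intro span_sum span_scale span_base) auto
  ultimately show "\<forall>\<^sub>F n in sequentially.
      infdist (ys n) (span (xs n ` J)) \<le> infdist y (span (x ` J)) + e"
    using p(2) by (elim eventually_mono) (metis infdist_le less_imp_le order_trans)
qed

lemma limsup_at_most_parallelotope_vol:
  assumes "finite I" "\<And>i. i \<in> I \<Longrightarrow> (\<lambda>n. xs n i) \<longlonglongrightarrow> x i"
  shows "limsup_at_most (\<lambda>n. parallelotope_vol (xs n) I) (parallelotope_vol x I)"
  unfolding parallelotope_vol_def
  using assms by (intro limsup_at_most_prod limsup_at_most_infdist_span) (auto simp: infdist_nonneg)

lemma limsup_at_most_attains_max:
  fixes f :: "'b \<Rightarrow> real"
  assumes "S \<noteq> {}" "bdd_above (f ` S)"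
    and "\<And>xs :: nat \<Rightarrow> 'b. \<forall>n. xs n \<in> S \<Longrightarrow>
      \<exists>r x. strict_mono r \<and> x \<in> S \<and> limsup_at_most (\<lambda>n. f (xs (r n))) (f x)"
  obtains x where "x \<in> S" "\<forall>y\<in>S. f y \<le> f x"
proof -
  have "Sup (f ` S) \<in> closure (f ` S)"
    using assms(1,2) by (intro closure_contains_Sup) auto
  then obtain v where v: "\<forall>n. v n \<in> f ` S" "v \<longlonglongrightarrow> Sup (f ` S)"
    unfolding closure_sequential by blast
  then have "\<forall>n. \<exists>x. x \<in> S \<and> v n = f x"
    by blast
  then obtain xs where xs: "\<forall>n. xs n \<in> S" "\<And>n. v n = f (xs n)"
    using choice[of "\<lambda>n x. x \<in> S \<and> v n = f x"] by blast
  obtain r x where r: "strict_mono r" "x \<in> S" "limsup_at_most (\<lambda>n. f (xs (r n))) (f x)"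
    using assms(3)[OF xs(1)] by blast
  have lim: "(\<lambda>n. f (xs (r n))) \<longlonglongrightarrow> Sup (f ` S)"
    using LIMSEQ_subseq_LIMSEQ[OF v(2) r(1)] by (simp add: xs(2) comp_def)
  have "Sup (f ` S) \<le> f x"
  proof (rule field_le_epsilon)
    fix e :: real
    assume "0 < e"
    then show "Sup (f ` S) \<le> f x + e"
      using r(3) tendsto_upperbound[OF lim] unfolding limsup_at_most_def by simp
  qed
  show ?thesis
  proof (rule that[OF r(2)], intro ballI)
    fix y
    assume "y \<in> S"
    then have "f y \<le> Sup (f ` S)"
      using assms(2) by (simp add: cSup_upper)
    with \<open>Sup (f ` S) \<le> f x\<close> show "f y \<le> f x"
      by linarith
  qed
qed

lemma compact_tuples_convergent_subseq:
  fixes xs :: "nat \<Rightarrow> 'b \<Rightarrow> 'a::heine_borel"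
  assumes "compact \<Gamma>" "finite I" "\<And>n i. i \<in> I \<Longrightarrow> xs n i \<in> \<Gamma>"
  obtains r l where "strict_mono r" "\<And>i. i \<in> I \<Longrightarrow> l i \<in> \<Gamma>"
    "\<And>i. i \<in> I \<Longrightarrow> (\<lambda>n. xs (r n) i) \<longlonglongrightarrow> l i"
proof -
  have "bounded ((\<lambda>x. x i) ` range xs)" if "i \<in> I" for i
    using assms(3)[OF that] compact_imp_bounded[OF assms(1)] by (auto intro: bounded_subset)
  then obtain l r where r: "strict_mono r"
    and conv: "\<forall>e>0. \<forall>\<^sub>F n in sequentially. \<forall>i\<in>I. dist (xs (r n) i) (l i) < e"
    using compact_lemma_general[of I "\<lambda>x i. x i" xs id] assms(2) by auto
  have lim: "(\<lambda>n. xs (r n) i) \<longlonglongrightarrow> l i" if "i \<in> I" for i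
    unfolding tendsto_iff
  proof (intro allI impI)
    fix e :: real
    assume "0 < e"
    with conv have "\<forall>\<^sub>F n in sequentially. \<forall>i\<in>I. dist (xs (r n) i) (l i) < e"
      by blast
    then show "\<forall>\<^sub>F n in sequentially. dist (xs (r n) i) (l i) < e"
      by (rule eventually_mono) (use that in blast)
  qed
  moreover have "l i \<in> \<Gamma>" if "i \<in> I" for i
    using closed_sequentially[OF compact_imp_closed[OF assms(1)] _ lim[OF that]] assms(3) that
    by blast
  ultimately show ?thesis
    using that r by blast
qed

lemma parallelotope_vol_attains_max:
  fixes \<Gamma> :: "'a::euclidean_space set"
  assumes "compact \<Gamma>" "\<Gamma> \<noteq> {}" "finite I"
  obtains l where "\<forall>i\<in>I. l i \<in> \<Gamma>"
    "\<And>x. \<forall>i\<in>I. x i \<in> \<Gamma> \<Longrightarrow> parallelotope_vol x I \<le> parallelotope_vol l I"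
proof -
  define S where "S = {x :: nat \<Rightarrow> 'a. \<forall>i\<in>I. x i \<in> \<Gamma>}"
  have "S \<noteq> {}"
    using assms(2) by (auto simp: S_def)
  moreover obtain B where "\<forall>x\<in>\<Gamma>. norm x \<le> B"
    using compact_imp_bounded[OF assms(1)] bounded_pos by blast
  then have "bdd_above ((\<lambda>x. parallelotope_vol x I) ` S)"
    by (intro bdd_aboveI[of _ "B ^ card I"]) (auto simp: S_def intro!: parallelotope_vol_le_power)
  moreover have "\<exists>r l. strict_mono r \<and> l \<in> S
      \<and> limsup_at_most (\<lambda>n. parallelotope_vol (xs (r n)) I) (parallelotope_vol l I)"
    if "\<forall>n. xs n \<in> S" for xs :: "nat \<Rightarrow> nat \<Rightarrow> 'a"
  proof -
    have "xs n i \<in> \<Gamma>" if "i \<in> I" for n i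
      using \<open>\<forall>n. xs n \<in> S\<close> that by (simp add: S_def)
    with compact_tuples_convergent_subseq[OF assms(1,3), where xs = xs]
    obtain r l where "strict_mono r" "\<And>i. i \<in> I \<Longrightarrow> l i \<in> \<Gamma>"
      "\<And>i. i \<in> I \<Longrightarrow> (\<lambda>n. xs (r n) i) \<longlonglongrightarrow> l i"
      by blast
    moreover from this(3)
    have "limsup_at_most (\<lambda>n. parallelotope_vol (xs (r n)) I) (parallelotope_vol l I)"
      by (rule limsup_at_most_parallelotope_vol[OF assms(3)])
    ultimately show ?thesis
      by (auto simp: S_def)
  qed
  ultimately obtain l where "l \<in> S" "\<forall>x\<in>S. parallelotope_vol x I \<le> parallelotope_vol l I"
    by (rule limsup_at_most_attains_max)
  then show ?thesis
    using that by (auto simp: S_def)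
qed

section \<open>Points far from low-dimensional subspaces\<close>

lemma dim_span_image_le_card:
  fixes x :: "'b \<Rightarrow> 'a::euclidean_space"
  assumes "finite J"
  shows "dim (span (x ` J)) \<le> card J"
  using dim_le_card'[of "x ` J"] card_image_le[OF assms, of x] assms by simp

lemma exists_superspace_of_dim:
  fixes S :: "'a::euclidean_space set"
  assumes "subspace S" "dim S \<le> n" "n \<le> DIM('a)"
  shows "\<exists>T. subspace T \<and> S \<subseteq> T \<and> dim T = n"
  using assms(2,3)
proof (induction n)
  case 0
  then show ?case
    using assms(1) by auto
next
  case (Suc n)
  show ?case
  proof (cases "dim S = Suc n")
    case True
    then show ?thesis
      using assms(1) by blast
  next
    case False
    then obtain T where T: "subspace T" "S \<subseteq> T" "dim T = n"
      using Suc by auto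
    then have "T \<noteq> UNIV"
      using Suc.prems(2) by auto
    then obtain y where "y \<notin> span T"
      using T(1) span_eq_iff by blast
    then have "dim (span (insert y T)) = Suc n"
      using T(3) by (simp add: dim_insert)
    moreover have "S \<subseteq> span (insert y T)"
      using T(2) span_superset by blast
    ultimately show ?thesis
      using subspace_span by blast
  qed
qed

lemma exists_far_point_if_dim_le:
  fixes \<Gamma> :: "'a::euclidean_space set"
  assumes "m \<le> DIM('a)" "\<forall>P \<in> Grassmannian m. \<exists>x \<in> \<Gamma>. \<delta> \<le> infdist x P"
    and "subspace S" "dim S \<le> m"
  shows "\<exists>x\<in>\<Gamma>. \<delta> \<le> infdist x S"
proof -
  obtain P where P: "subspace P" "S \<subseteq> P" "dim P = m"
    using exists_superspace_of_dim[OF assms(3,4,1)] by blast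
  then obtain x where "x \<in> \<Gamma>" "\<delta> \<le> infdist x P"
    using assms(2) by (auto simp: Grassmannian_def)
  moreover have "infdist x P \<le> infdist x S"
    using P(2) assms(3) subspace_0 by (intro infdist_mono) auto
  ultimately show ?thesis
    by force
qed

lemma exists_far_point_from_span_image:
  fixes \<Gamma> :: "'a::euclidean_space set" and x :: "'b \<Rightarrow> 'a"
  assumes "m \<le> DIM('a)" "\<forall>P \<in> Grassmannian m. \<exists>x \<in> \<Gamma>. \<delta> \<le> infdist x P"
    and "finite J" "card J \<le> m"
  shows "\<exists>y\<in>\<Gamma>. \<delta> \<le> infdist y (span (x ` J))"
proof -
  have "dim (span (x ` J)) \<le> m"
    using dim_span_image_le_card[OF assms(3), of x] assms(4) by linarith
  then show ?thesis
    by (rule exists_far_point_if_dim_le[OF assms(1,2) subspace_span])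
qed

lemma exists_tuple_parallelotope_vol_ge_power:
  fixes \<Gamma> :: "'a::euclidean_space set"
  assumes "0 \<le> \<delta>"
    and "\<And>x :: nat \<Rightarrow> 'a. \<And>J. finite J \<Longrightarrow> card J < k \<Longrightarrow> \<exists>y\<in>\<Gamma>. \<delta> \<le> infdist y (span (x ` J))"
  shows "\<exists>x. (\<forall>i\<in>{1..k}. x i \<in> \<Gamma>) \<and> \<delta> ^ k \<le> parallelotope_vol x {1..k}"
  using assms(2)
proof (induction k)
  case 0
  then show ?case
    by (simp add: parallelotope_vol_def)
next
  case (Suc k)
  then obtain x where x: "\<forall>i\<in>{1..k}. x i \<in> \<Gamma>" "\<delta> ^ k \<le> parallelotope_vol x {1..k}"
    by (meson less_SucI)
  obtain y where y: "y \<in> \<Gamma>" "\<delta> \<le> infdist y (span (x ` {1..k}))"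
    using Suc.prems[of "{1..k}" x] by auto
  define x' where "x' = x(Suc k := y)"
  have "x' ` {1..k} = x ` {1..k}" "parallelotope_vol x' {1..k} = parallelotope_vol x {1..k}"
    by (auto simp: x'_def intro: parallelotope_vol_cong)
  moreover have "{1..Suc k} = insert (Suc k) {1..k}" "x' (Suc k) = y"
    by (auto simp: x'_def)
  ultimately have "parallelotope_vol x' {1..Suc k}
      = infdist y (span (x ` {1..k})) * parallelotope_vol x {1..k}"
    by (simp add: parallelotope_vol_insert_max)
  also have "\<dots> \<ge> \<delta> * \<delta> ^ k"
    using x(2) y(2) assms(1) by (intro mult_mono) (auto simp: infdist_nonneg)
  finally have "\<delta> ^ Suc k \<le> parallelotope_vol x' {1..Suc k}"
    by simp
  moreover have "\<forall>i\<in>{1..Suc k}. x' i \<in> \<Gamma>"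
    using x(1) y(1) by (auto simp: x'_def)
  ultimately show ?case
    by blast
qed

theorem mainTheorem6:
  fixes \<Gamma> :: "'a::euclidean_space set" and \<delta> :: real and m :: nat
  assumes "compact \<Gamma>" and "\<delta> > 0" and "m \<le> DIM('a)"
    and "\<forall>P \<in> Grassmannian m. \<exists>x \<in> \<Gamma>. infdist x P \<ge> \<delta>"
  shows "\<exists>x :: nat \<Rightarrow> 'a. (\<forall>i \<in> {1..m+1}. x i \<in> \<Gamma>) \<and> min_height x (m+1) \<ge> \<delta>"
proof -
  let ?I = "{1..m+1}"
  note far = exists_far_point_from_span_image[OF assms(3,4)]
  have "\<exists>y\<in>\<Gamma>. \<delta> \<le> infdist y (span (x ` J))"
    if "finite J" "card J < m + 1" for x :: "nat \<Rightarrow> 'a" and J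
    using far[OF that(1)] that(2) by simp
  then obtain x0 where x0: "\<forall>i\<in>?I. x0 i \<in> \<Gamma>" "\<delta> ^ (m + 1) \<le> parallelotope_vol x0 ?I"
    using exists_tuple_parallelotope_vol_ge_power[of \<delta> "m + 1" \<Gamma>] assms(2) by auto
  then have "\<Gamma> \<noteq> {}"
    by auto
  then obtain l where l: "\<forall>i\<in>?I. l i \<in> \<Gamma>"
    and l_max: "\<And>x. \<forall>i\<in>?I. x i \<in> \<Gamma> \<Longrightarrow> parallelotope_vol x ?I \<le> parallelotope_vol l ?I"
    using parallelotope_vol_attains_max[OF assms(1) _ finite_atLeastAtMost] by blast
  have "0 < parallelotope_vol l ?I"
    using x0(2) l_max[OF x0(1)] assms(2) zero_less_power[of \<delta> "m + 1"] by linarith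
  have "\<delta> \<le> infdist (l j) (span (l ` (?I - {j})))" if "j \<in> ?I" for j
  proof -
    have "card (?I - {j}) \<le> m"
      using that by simp
    then obtain y where y: "y \<in> \<Gamma>" "\<delta> \<le> infdist y (span (l ` (?I - {j})))"
      using far[of "?I - {j}" l] by auto
    then have "parallelotope_vol (l(j := y)) ?I \<le> parallelotope_vol l ?I"
      using l by (intro l_max) auto
    then have "infdist y (span (l ` (?I - {j}))) \<le> infdist (l j) (span (l ` (?I - {j})))"
      by (rule infdist_le_at_parallelotope_vol_max[OF finite_atLeastAtMost that
            \<open>0 < parallelotope_vol l ?I\<close>])
    with y(2) show ?thesis
      by linarith
  qed
  then show ?thesis
    using l unfolding min_height_def by (intro exI[of _ l]) auto
qed

end
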